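(* For every integer $n\ge 1$, $\mathrm{TC}(\mathbb{S}^n)=4$, where $\mathbb{S}^n$ is the minimal finite model of the $n$-sphere.
   Context: Finite $T_0$ spaces are identified with finite posets (open sets are the down-closed sets). The non-Hausdorff join $A\circledast B$ is $A\sqcup B$ with the orders of $A$ and $B$ kept and $a\le b$ for all $a\in A,b\in B$. $\mathbb{S}^0$ is the two-point discrete space and inductively $\mathbb{S}^n=\mathbb{S}^{n-1}\circledast\mathbb{S}^0$ (a space with $2n+2$ points). Topological complexity is unreduced: $\mathrm{TC}(X)$ is the minimal $k$ such that $X\times X$ is covered by $k$ open sets each admitting a continuous section of $\pi:X^I\to X\times X$, $\gamma\mapsto(\gamma(0),\gamma(1))$. *)

theory Defs
  imports "HOL-Analysis.Analysis" "HOL-Library.Extended_Nat"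
begin

definition down_closed :: "'a set \<Rightarrow> ('a \<Rightarrow> 'a \<Rightarrow> bool) \<Rightarrow> 'a set \<Rightarrow> bool" where
  "down_closed P le U \<longleftrightarrow> U \<subseteq> P \<and> (\<forall>x\<in>U. \<forall>y\<in>P. le y x \<longrightarrow> y \<in> U)"

lemma istopology_down_closed: "istopology (down_closed P le)"
  unfolding istopology_def down_closed_def by blast

definition poset_topology :: "'a set \<Rightarrow> ('a \<Rightarrow> 'a \<Rightarrow> bool) \<Rightarrow> 'a topology" where
  "poset_topology P le = topology (down_closed P le)"

lemma openin_poset_topology: "openin (poset_topology P le) U \<longleftrightarrow> down_closed P le U"
  unfolding poset_topology_def by (metis topology_inverse' istopology_down_closed)

text \<open>Non-Hausdorff join of two posets (with disjoint carriers, inside a common type):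
  orders kept, and every element of the first below every element of the second.\<close>

definition nh_join :: "'a set \<times> ('a \<Rightarrow> 'a \<Rightarrow> bool) \<Rightarrow> 'a set \<times> ('a \<Rightarrow> 'a \<Rightarrow> bool)
    \<Rightarrow> 'a set \<times> ('a \<Rightarrow> 'a \<Rightarrow> bool)" where
  "nh_join A B = (fst A \<union> fst B,
     (\<lambda>x y. (x \<in> fst A \<and> y \<in> fst A \<and> snd A x y) \<or> (x \<in> fst B \<and> y \<in> fst B \<and> snd B x y)
          \<or> (x \<in> fst A \<and> y \<in> fst B)))"

definition S0_at :: "nat \<Rightarrow> (nat \<times> bool) set \<times> ((nat \<times> bool) \<Rightarrow> (nat \<times> bool) \<Rightarrow> bool)" where
  "S0_at k = ({(k, False), (k, True)}, (=))"

fun sphere_poset :: "nat \<Rightarrow> (nat \<times> bool) set \<times> ((nat \<times> bool) \<Rightarrow> (nat \<times> bool) \<Rightarrow> bool)" where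
  "sphere_poset 0 = S0_at 0"
| "sphere_poset (Suc n) = nh_join (sphere_poset n) (S0_at (Suc n))"

definition finite_sphere :: "nat \<Rightarrow> (nat \<times> bool) topology" where
  "finite_sphere n = poset_topology (fst (sphere_poset n)) (snd (sphere_poset n))"

definition path_space :: "'a topology \<Rightarrow> (real \<Rightarrow> 'a) topology" where
  "path_space X = subtopology
     (topology_generated_by
        {{\<gamma>. \<gamma> ` K \<subseteq> U} | K U. compactin (top_of_set {0..1::real}) K \<and> openin X U})
     {\<gamma>. continuous_map (top_of_set {0..1::real}) X \<gamma> \<and> (\<forall>t. t \<notin> {0..1} \<longrightarrow> \<gamma> t = undefined)}"

definition has_motion_planner :: "'a topology \<Rightarrow> ('a \<times> 'a) set \<Rightarrow> bool" where
  "has_motion_planner X U \<longleftrightarrow>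
     (\<exists>s. continuous_map (subtopology (prod_topology X X) U) (path_space X) s
          \<and> (\<forall>p\<in>U. (s p 0, s p 1) = p))"

text \<open>Unreduced topological complexity (infinity if no finite such cover exists).\<close>
definition TC :: "'a topology \<Rightarrow> enat" where
  "TC X = (INF k \<in> {k. \<exists>U :: nat \<Rightarrow> ('a \<times> 'a) set.
              (\<forall>i<k. openin (prod_topology X X) (U i) \<and> has_motion_planner X (U i))
              \<and> (\<Union>i<k. U i) = topspace (prod_topology X X)}. enat k)"

end

theory Submission
  imports Defs
begin

text \<open>A point of \<open>S\<^sup>n\<close> is a pair \<open>(k, b)\<close>, the point \<open>b\<close> of the \<open>k\<close>-th copy of \<open>S\<^sup>0\<close>,
  and \<open>(k, b) < (k', b')\<close> iff \<open>k < k'\<close>.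

  Lower bound: a motion planner \<open>s\<close> on an open \<open>U \<subseteq> X \<times> X\<close> is monotone, so for monotone
  \<open>f\<close>, \<open>g\<close> with graph in \<open>U\<close> the maps \<open>x \<mapsto> s (f x, g x) t\<close> form a path of monotone
  self-maps from \<open>f\<close> to \<open>g\<close>. As \<open>S\<^sup>n\<close> has no beat points, a monotone self-map comparable
  with the identity is the identity, and therefore \<open>f = id\<close> iff \<open>g = id\<close>. Two distinct pairs of
  maximal points in \<open>U\<close> would give \<open>f\<close>, \<open>g\<close> violating this, so the four pairs of maximal
  points need four different sets.

  Upper bound: the products of the down-sets of two maximal points are open, cover
  \<open>X \<times> X\<close>, and each has a planner passing through the two maximal points and the minimum.\<close>

definition sphere_le :: "nat \<Rightarrow> nat \<times> bool \<Rightarrow> nat \<times> bool \<Rightarrow> bool" where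
  "sphere_le n x y \<longleftrightarrow> fst x \<le> n \<and> fst y \<le> n \<and> (fst x < fst y \<or> x = y)"

lemma sphere_le_trans: "sphere_le n x y \<Longrightarrow> sphere_le n y z \<Longrightarrow> sphere_le n x z"
  by (auto simp: sphere_le_def)

lemma sphere_poset_explicit:
  "fst (sphere_poset n) = {p. fst p \<le> n} \<and>
   (\<forall>x y. fst x \<le> n \<longrightarrow> fst y \<le> n \<longrightarrow> snd (sphere_poset n) x y = sphere_le n x y)"
proof (induction n)
  case 0
  have "{(0::nat, False), (0, True)} = {p::nat \<times> bool. fst p \<le> 0}"
    by auto
  then show ?case by (auto simp: S0_at_def sphere_le_def)
next
  case (Suc n)
  then have "fst (sphere_poset (Suc n)) = {p. fst p \<le> Suc n}"
    by (auto simp: nh_join_def S0_at_def le_Suc_eq)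
  moreover have "snd (sphere_poset (Suc n)) x y = sphere_le (Suc n) x y"
    if "fst x \<le> Suc n" "fst y \<le> Suc n" for x y
    using Suc that by (cases x, cases y) (auto simp: nh_join_def S0_at_def sphere_le_def le_Suc_eq)
  ultimately show ?case by blast
qed

lemma down_closed_cong:
  assumes "\<And>x y. x \<in> P \<Longrightarrow> y \<in> P \<Longrightarrow> le x y \<longleftrightarrow> le' x y"
  shows "down_closed P le = down_closed P le'"
  using assms by (auto simp: fun_eq_iff down_closed_def subset_iff)

lemma topspace_poset_topology: "topspace (poset_topology P le) = P"
proof -
  have "openin (poset_topology P le) P"
    by (simp add: openin_poset_topology down_closed_def)
  then show ?thesis
    unfolding topspace_def by (auto simp: openin_poset_topology down_closed_def)
qed

lemma finite_sphere_eq: "finite_sphere n = poset_topology {p. fst p \<le> n} (sphere_le n)"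
proof -
  obtain carrier: "fst (sphere_poset n) = {p. fst p \<le> n}"
    and order: "\<And>x y. fst x \<le> n \<Longrightarrow> fst y \<le> n \<Longrightarrow> snd (sphere_poset n) x y = sphere_le n x y"
    using sphere_poset_explicit[of n] by blast
  have "down_closed (fst (sphere_poset n)) (snd (sphere_poset n))
      = down_closed {p. fst p \<le> n} (sphere_le n)"
    unfolding carrier by (rule down_closed_cong) (simp add: order)
  then show ?thesis
    by (simp add: finite_sphere_def poset_topology_def)
qed

lemma topspace_finite_sphere: "topspace (finite_sphere n) = {p. fst p \<le> n}"
  by (simp add: finite_sphere_eq topspace_poset_topology)

lemma openin_finite_sphere:
  "openin (finite_sphere n) W \<longleftrightarrow>
     W \<subseteq> {p. fst p \<le> n} \<and> (\<forall>x\<in>W. \<forall>y. sphere_le n y x \<longrightarrow> y \<in> W)"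
  by (auto simp: finite_sphere_eq openin_poset_topology down_closed_def sphere_le_def)

lemma openin_finite_sphere_down_set:
  "fst x \<le> n \<Longrightarrow> openin (finite_sphere n) {y. sphere_le n y x}"
  by (auto simp: openin_finite_sphere sphere_le_def)

lemma openin_finite_sphere_below:
  "openin (finite_sphere n) W \<Longrightarrow> x \<in> W \<Longrightarrow> sphere_le n y x \<Longrightarrow> y \<in> W"
  by (metis openin_finite_sphere)

lemma continuous_map_into_finite_sphere:
  fixes S :: "'a::metric_space set"
  shows "continuous_map (top_of_set S) (finite_sphere n) \<gamma> \<longleftrightarrow>
    (\<forall>t\<in>S. fst (\<gamma> t) \<le> n \<and> (\<exists>e>0. \<forall>s\<in>S. dist s t < e \<longrightarrow> sphere_le n (\<gamma> s) (\<gamma> t)))"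
proof
  assume cont: "continuous_map (top_of_set S) (finite_sphere n) \<gamma>"
  show "\<forall>t\<in>S. fst (\<gamma> t) \<le> n \<and> (\<exists>e>0. \<forall>s\<in>S. dist s t < e \<longrightarrow> sphere_le n (\<gamma> s) (\<gamma> t))"
  proof
    fix t assume t: "t \<in> S"
    then have le: "fst (\<gamma> t) \<le> n"
      using cont by (auto simp: continuous_map_def topspace_finite_sphere)
    have "openin (top_of_set S) {s \<in> topspace (top_of_set S). \<gamma> s \<in> {y. sphere_le n y (\<gamma> t)}}"
      using cont openin_finite_sphere_down_set[OF le] unfolding continuous_map_def by blast
    moreover have "t \<in> {s \<in> S. sphere_le n (\<gamma> s) (\<gamma> t)}"
      using t le by (simp add: sphere_le_def)
    ultimately show "fst (\<gamma> t) \<le> n \<and> (\<exists>e>0. \<forall>s\<in>S. dist s t < e \<longrightarrow> sphere_le n (\<gamma> s) (\<gamma> t))"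
      using le unfolding openin_euclidean_subtopology_iff by auto
  qed
next
  assume local: "\<forall>t\<in>S. fst (\<gamma> t) \<le> n \<and> (\<exists>e>0. \<forall>s\<in>S. dist s t < e \<longrightarrow> sphere_le n (\<gamma> s) (\<gamma> t))"
  have "openin (top_of_set S) {t \<in> S. \<gamma> t \<in> W}" if W: "openin (finite_sphere n) W" for W
    unfolding openin_euclidean_subtopology_iff
  proof (intro conjI ballI)
    fix t assume "t \<in> {t \<in> S. \<gamma> t \<in> W}"
    then show "\<exists>e>0. \<forall>s\<in>S. dist s t < e \<longrightarrow> s \<in> {t \<in> S. \<gamma> t \<in> W}"
      using local openin_finite_sphere_below[OF W] by blast
  qed auto
  then show "continuous_map (top_of_set S) (finite_sphere n) \<gamma>"
    using local by (auto simp: continuous_map_def topspace_finite_sphere)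
qed

text \<open>The next two lemmas say that \<open>S\<^sup>n\<close> has no beat points: every non-minimal point
  covers two incomparable points, and every non-maximal point is covered by two.\<close>

lemma sphere_mono_below_id:
  assumes mono: "\<And>x y. sphere_le n x y \<Longrightarrow> sphere_le n (\<phi> x) (\<phi> y)"
    and below: "\<And>x. fst x \<le> n \<Longrightarrow> sphere_le n (\<phi> x) x"
    and "fst x \<le> n"
  shows "\<phi> x = x"
  using \<open>fst x \<le> n\<close>
proof (induction "fst x" arbitrary: x rule: less_induct)
  case less
  show ?case
  proof (cases "fst x")
    case 0
    then show ?thesis using below[OF less.prems] by (auto simp: sphere_le_def)
  next
    case (Suc j)
    have "\<phi> (j, c) = (j, c)" "sphere_le n (j, c) x" for c
      using less.hyps[of "(j, c)"] less.prems Suc by (auto simp: sphere_le_def)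
    then have "sphere_le n (j, c) (\<phi> x)" for c
      using mono by metis
    from this[of False] this[of True] have "j < fst (\<phi> x)"
      by (cases "\<phi> x") (auto simp: sphere_le_def)
    then show ?thesis
      using below[OF less.prems] Suc by (auto simp: sphere_le_def)
  qed
qed

lemma sphere_mono_above_id:
  assumes mono: "\<And>x y. sphere_le n x y \<Longrightarrow> sphere_le n (\<phi> x) (\<phi> y)"
    and above: "\<And>x. fst x \<le> n \<Longrightarrow> sphere_le n x (\<phi> x)"
    and "fst x \<le> n"
  shows "\<phi> x = x"
  using \<open>fst x \<le> n\<close>
proof (induction "n - fst x" arbitrary: x rule: less_induct)
  case less
  show ?case
  proof (cases "fst x = n")
    case True
    then show ?thesis using above[OF less.prems] by (auto simp: sphere_le_def)
  next
    case False
    have "\<phi> (Suc (fst x), c) = (Suc (fst x), c)" "sphere_le n x (Suc (fst x), c)" for c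
      using less.hyps[of "(Suc (fst x), c)"] less.prems False by (auto simp: sphere_le_def)
    then have "sphere_le n (\<phi> x) (Suc (fst x), c)" for c
      using mono by metis
    from this[of False] this[of True] have "fst (\<phi> x) < Suc (fst x)"
      by (cases "\<phi> x") (auto simp: sphere_le_def)
    then show ?thesis
      using above[OF less.prems] by (auto simp: sphere_le_def)
  qed
qed

lemma compact_open_subbasis_UNIV:
  "UNIV \<in> {{\<gamma>. \<gamma> ` K \<subseteq> U} | K U. compactin (top_of_set {0..1::real}) K \<and> openin X U}"
  by (rule CollectI, rule exI[of _ "{}"], rule exI[of _ "{}"]) auto

lemma topspace_path_space:
  "topspace (path_space X) =
     {\<gamma>. continuous_map (top_of_set {0..1::real}) X \<gamma> \<and> (\<forall>t. t \<notin> {0..1} \<longrightarrow> \<gamma> t = undefined)}"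
proof -
  have "\<Union>{{\<gamma>. \<gamma> ` K \<subseteq> U} | K U. compactin (top_of_set {0..1::real}) K \<and> openin X U}
      = (UNIV :: (real \<Rightarrow> 'a) set)"
    using compact_open_subbasis_UNIV by blast
  then show ?thesis
    unfolding path_space_def by simp
qed

lemma openin_path_space_eval:
  assumes "t \<in> {0..1}" "openin X V"
  shows "openin (path_space X) {\<gamma> \<in> topspace (path_space X). \<gamma> t \<in> V}"
proof -
  let ?S = "{{\<gamma>. \<gamma> ` K \<subseteq> U} | K U. compactin (top_of_set {0..1::real}) K \<and> openin X U}"
  have "compactin (top_of_set {0..1::real}) {t}"
    using assms(1) by simp
  then have "{\<gamma>. \<gamma> ` {t} \<subseteq> V} \<in> ?S"
    using assms(2) by blast
  then have "openin (topology_generated_by ?S) {\<gamma>. \<gamma> t \<in> V}"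
    by (simp add: openin_topology_generated_by_iff generate_topology_on.Basis)
  then have "openin (path_space X) (topspace (path_space X) \<inter> {\<gamma>. \<gamma> t \<in> V})"
    unfolding topspace_path_space unfolding path_space_def by (rule openin_subtopology_Int2)
  then show ?thesis
    by (simp add: Int_def)
qed

lemma continuous_map_into_path_space:
  assumes paths: "\<And>p. p \<in> topspace Y \<Longrightarrow>
      continuous_map (top_of_set {0..1}) X (s p) \<and> (\<forall>t. t \<notin> {0..1} \<longrightarrow> s p t = undefined)"
    and opens: "\<And>K V. compactin (top_of_set {0..1::real}) K \<Longrightarrow> openin X V \<Longrightarrow>
      openin Y {p \<in> topspace Y. s p ` K \<subseteq> V}"
  shows "continuous_map Y (path_space X) s"
  unfolding path_space_def continuous_map_in_subtopology
proof
  let ?S = "{{\<gamma>. \<gamma> ` K \<subseteq> U} | K U. compactin (top_of_set {0..1::real}) K \<and> openin X U}"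
  show "continuous_map Y (topology_generated_by ?S) s"
  proof (rule continuous_on_generated_topo)
    fix B assume "B \<in> ?S"
    then obtain K V where "B = {\<gamma>. \<gamma> ` K \<subseteq> V}" "compactin (top_of_set {0..1}) K" "openin X V"
      by blast
    then show "openin Y (s -` B \<inter> topspace Y)"
      using opens[of K V] by (simp add: Int_def conj_commute)
  next
    show "s ` topspace Y \<subseteq> \<Union> ?S"
      using compact_open_subbasis_UNIV by blast
  qed
  show "s \<in> topspace Y \<rightarrow> {\<gamma>. continuous_map (top_of_set {0..1}) X \<gamma> \<and> (\<forall>t. t \<notin> {0..1} \<longrightarrow> \<gamma> t = undefined)}"
    using paths by blast
qed

lemma motion_planner_path:
  assumes "continuous_map (subtopology (prod_topology X X) U) (path_space X) s"
    and "p \<in> U" "p \<in> topspace (prod_topology X X)"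
  shows "continuous_map (top_of_set {0..1}) X (s p)"
proof -
  have "p \<in> topspace (subtopology (prod_topology X X) U)"
    using assms(2,3) by (simp add: topspace_subtopology)
  then have "s p \<in> topspace (path_space X)"
    using assms(1) unfolding continuous_map_def by blast
  then show ?thesis
    by (simp add: topspace_path_space)
qed

lemma openin_prod_topology_specialize:
  assumes "openin (prod_topology X Y) W" "(a, b) \<in> W"
    and "\<And>U. openin X U \<Longrightarrow> a \<in> U \<Longrightarrow> a' \<in> U"
    and "\<And>V. openin Y V \<Longrightarrow> b \<in> V \<Longrightarrow> b' \<in> V"
  shows "(a', b') \<in> W"
proof -
  obtain U V where "openin X U" "openin Y V" "a \<in> U" "b \<in> V" "U \<times> V \<subseteq> W"
    using iffD1[OF openin_prod_topology_alt assms(1), rule_format, OF assms(2)] by blast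
  then show ?thesis
    using assms(3,4) by blast
qed

text \<open>Evaluation at a fixed time is continuous on the path space, so a motion planner
  preserves the specialisation preorder.\<close>

lemma motion_planner_specialize:
  assumes s: "continuous_map (subtopology (prod_topology X X) U) (path_space X) s"
    and U: "U \<subseteq> topspace (prod_topology X X)" "(a, b) \<in> U" "(a', b') \<in> U"
    and a: "\<And>W. openin X W \<Longrightarrow> a \<in> W \<Longrightarrow> a' \<in> W"
    and b: "\<And>W. openin X W \<Longrightarrow> b \<in> W \<Longrightarrow> b' \<in> W"
    and t: "t \<in> {0..1}" and V: "openin X V" "s (a, b) t \<in> V"
  shows "s (a', b') t \<in> V"
proof -
  have ts: "topspace (subtopology (prod_topology X X) U) = U"
    using U(1) by (auto simp: topspace_subtopology)
  have "s p \<in> topspace (path_space X)" if "p \<in> U" for p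
    using s that ts unfolding continuous_map_def by blast
  then have "{p \<in> topspace (subtopology (prod_topology X X) U).
         s p \<in> {\<gamma> \<in> topspace (path_space X). \<gamma> t \<in> V}} = {p \<in> U. s p t \<in> V}"
    using ts by auto
  moreover have "openin (subtopology (prod_topology X X) U)
      {p \<in> topspace (subtopology (prod_topology X X) U).
         s p \<in> {\<gamma> \<in> topspace (path_space X). \<gamma> t \<in> V}}"
    using s openin_path_space_eval[OF t V(1)] unfolding continuous_map_def by blast
  ultimately have "openin (subtopology (prod_topology X X) U) {p \<in> U. s p t \<in> V}"
    by simp
  then obtain W where W: "openin (prod_topology X X) W" "{p \<in> U. s p t \<in> V} = W \<inter> U"
    unfolding openin_subtopology by blast
  have "(a, b) \<in> W"
    using W(2) U V(2) by blast
  then have "(a', b') \<in> W"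
    using openin_prod_topology_specialize[OF W(1) _ a b] by blast
  then show ?thesis
    using W(2) U(3) by blast
qed

lemma TC_eqI:
  fixes m :: nat
  assumes cover: "\<forall>i<m. openin (prod_topology X X) (U i) \<and> has_motion_planner X (U i)"
      "(\<Union>i<m. U i) = topspace (prod_topology X X)"
    and minimal: "\<And>k V. \<forall>i<k. openin (prod_topology X X) (V i) \<and> has_motion_planner X (V i) \<Longrightarrow>
      (\<Union>i<k. V i) = topspace (prod_topology X X) \<Longrightarrow> m \<le> k"
  shows "TC X = enat m"
proof -
  let ?K = "{k. \<exists>U :: nat \<Rightarrow> ('a \<times> 'a) set.
      (\<forall>i<k. openin (prod_topology X X) (U i) \<and> has_motion_planner X (U i))
      \<and> (\<Union>i<k. U i) = topspace (prod_topology X X)}"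
  have "m \<in> ?K"
    using cover by blast
  then have "(INF k\<in>?K. enat k) \<le> enat m"
    by (rule INF_lower)
  moreover have "enat m \<le> (INF k\<in>?K. enat k)"
    using minimal by (auto intro!: INF_greatest)
  ultimately show ?thesis
    unfolding TC_def by (rule antisym)
qed

lemma sphere_motion_planner_mono:
  fixes n :: nat
  defines "X \<equiv> finite_sphere n"
  assumes s: "continuous_map (subtopology (prod_topology X X) U) (path_space X) s"
    and U: "openin (prod_topology X X) U" "(a, b) \<in> U" "(a', b') \<in> U"
    and le: "sphere_le n a' a" "sphere_le n b' b" and t: "t \<in> {0..1}"
  shows "sphere_le n (s (a', b') t) (s (a, b) t)"
proof -
  have "(a, b) \<in> topspace (prod_topology X X)"
    using U openin_subset by blast
  then have "continuous_map (top_of_set {0..1}) X (s (a, b))"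
    using motion_planner_path[OF s U(2)] by blast
  then have "fst (s (a, b) t) \<le> n"
    using t unfolding X_def continuous_map_into_finite_sphere by blast
  have below: "\<And>W. openin X W \<Longrightarrow> x \<in> W \<Longrightarrow> y \<in> W" if "sphere_le n y x" for x y
    using openin_finite_sphere_below that unfolding X_def by blast
  have "s (a', b') t \<in> {y. sphere_le n y (s (a, b) t)}"
  proof (rule motion_planner_specialize[OF s openin_subset[OF U(1)] U(2,3) below below t])
    show "openin X {y. sphere_le n y (s (a, b) t)}"
      unfolding X_def by (rule openin_finite_sphere_down_set) fact
    show "s (a, b) t \<in> {y. sphere_le n y (s (a, b) t)}"
      using \<open>fst (s (a, b) t) \<le> n\<close> by (simp add: sphere_le_def)
  qed (use le in auto)
  then show ?thesis by simp
qed

text \<open>Along a path of monotone self-maps, being the identity is locally constant: nearby maps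
  lie below the given one, so the no-beat-point lemmas apply.\<close>

lemma sphere_mono_path_id_iff:
  assumes cont: "\<And>x. fst x \<le> n \<Longrightarrow> continuous_map (top_of_set {0..1}) (finite_sphere n) (\<lambda>t. h t x)"
    and mono: "\<And>t x y. t \<in> {0..1::real} \<Longrightarrow> sphere_le n x y \<Longrightarrow> sphere_le n (h t x) (h t y)"
  shows "(\<forall>x. fst x \<le> n \<longrightarrow> h 0 x = x) \<longleftrightarrow> (\<forall>x. fst x \<le> n \<longrightarrow> h 1 x = x)"
proof -
  let ?I = "{0..1::real}" and ?C = "{p :: nat \<times> bool. fst p \<le> n}"
  let ?id = "\<lambda>t. \<forall>x\<in>?C. h t x = x"
  have "finite ?C"
    by (rule finite_subset[of _ "{..n} \<times> UNIV"]) auto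
  have near: "\<forall>\<^sub>F s in at t within ?I. s \<in> ?I \<and> (\<forall>x\<in>?C. sphere_le n (h s x) (h t x))"
    if "t \<in> ?I" for t
  proof (rule eventually_conj)
    show "\<forall>\<^sub>F s in at t within ?I. s \<in> ?I"
      by (simp add: eventually_at_filter)
    show "\<forall>\<^sub>F s in at t within ?I. \<forall>x\<in>?C. sphere_le n (h s x) (h t x)"
    proof (rule eventually_ball_finite[OF \<open>finite ?C\<close>], rule ballI)
      fix x assume "x \<in> ?C"
      then obtain e where "e > 0" "\<forall>s\<in>?I. dist s t < e \<longrightarrow> sphere_le n (h s x) (h t x)"
        using cont[of x] \<open>t \<in> ?I\<close> unfolding continuous_map_into_finite_sphere by blast
      then show "\<forall>\<^sub>F s in at t within ?I. sphere_le n (h s x) (h t x)"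
        unfolding eventually_at by blast
    qed
  qed
  have "\<forall>\<^sub>F s in at t within ?I. ?id t = ?id s" if t: "t \<in> ?I" for t
    using near[OF t]
  proof (rule eventually_mono)
    fix s assume s: "s \<in> ?I \<and> (\<forall>x\<in>?C. sphere_le n (h s x) (h t x))"
    show "?id t = ?id s"
    proof
      assume "?id t"
      show "?id s"
      proof
        fix x assume "x \<in> ?C"
        have "\<And>x y. sphere_le n x y \<Longrightarrow> sphere_le n (h s x) (h s y)"
          using mono s by blast
        then show "h s x = x"
          by (rule sphere_mono_below_id) (use s \<open>?id t\<close> \<open>x \<in> ?C\<close> in auto)
      qed
    next
      assume "?id s"
      show "?id t"
      proof
        fix x assume "x \<in> ?C"
        have "\<And>x y. sphere_le n x y \<Longrightarrow> sphere_le n (h t x) (h t y)"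
          using mono t by blast
        then show "h t x = x"
          by (rule sphere_mono_above_id) (use s \<open>?id s\<close> \<open>x \<in> ?C\<close> in auto)
      qed
    qed
  qed
  then have "?id 0 = ?id 1"
    by (intro connected_local_const[of ?I]) auto
  then show ?thesis
    by simp
qed

lemma sphere_motion_planner_graph_id_iff:
  fixes n :: nat
  defines "X \<equiv> finite_sphere n"
  assumes U: "openin (prod_topology X X) U" "has_motion_planner X U"
    and f: "\<And>x y. sphere_le n x y \<Longrightarrow> sphere_le n (f x) (f y)"
    and g: "\<And>x y. sphere_le n x y \<Longrightarrow> sphere_le n (g x) (g y)"
    and graph: "\<And>x. fst x \<le> n \<Longrightarrow> (f x, g x) \<in> U"
  shows "(\<forall>x. fst x \<le> n \<longrightarrow> f x = x) \<longleftrightarrow> (\<forall>x. fst x \<le> n \<longrightarrow> g x = x)"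
proof -
  obtain s where s: "continuous_map (subtopology (prod_topology X X) U) (path_space X) s"
    and ends: "\<forall>p\<in>U. (s p 0, s p 1) = p"
    using U(2) unfolding has_motion_planner_def by blast
  define h where "h t x = s (f x, g x) t" for t x
  have "continuous_map (top_of_set {0..1}) X (\<lambda>t. h t x)" if "fst x \<le> n" for x
    unfolding h_def
    by (rule motion_planner_path[OF s graph[OF that]]) (use U(1) graph[OF that] openin_subset in blast)
  moreover have "sphere_le n (h t x) (h t y)" if "t \<in> {0..1}" "sphere_le n x y" for t x y
    unfolding h_def X_def
  proof (rule sphere_motion_planner_mono[OF s[unfolded X_def] U(1)[unfolded X_def]])
    show "(f x, g x) \<in> U" "(f y, g y) \<in> U"
      using graph that(2) by (auto simp: sphere_le_def)
  qed (use f g that in auto)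
  ultimately have "(\<forall>x. fst x \<le> n \<longrightarrow> h 0 x = x) \<longleftrightarrow> (\<forall>x. fst x \<le> n \<longrightarrow> h 1 x = x)"
    unfolding X_def by (rule sphere_mono_path_id_iff)
  moreover have "h 0 x = f x" "h 1 x = g x" if "fst x \<le> n" for x
    using ends graph[OF that] unfolding h_def by auto
  ultimately show ?thesis
    by auto
qed

text \<open>From two distinct pairs one builds monotone \<open>f\<close>, \<open>g\<close> with graph in \<open>U\<close> such that
  exactly one of them is the identity: the other is constant, or exchanges the two points of
  every lower level.\<close>

lemma sphere_motion_planner_maximal_pair_unique:
  fixes n :: nat
  defines "X \<equiv> finite_sphere n"
  assumes "n \<ge> 1"
    and U: "openin (prod_topology X X) U" "has_motion_planner X U"
    and max1: "((n, a1), (n, b1)) \<in> U" and max2: "((n, a2), (n, b2)) \<in> U"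
  shows "(a1, b1) = (a2, b2)"
proof (rule ccontr)
  assume ne: "(a1, b1) \<noteq> (a2, b2)"
  have below_max: "(x, y) \<in> U" if "((n, a), (n, b)) \<in> U" "sphere_le n x (n, a)" "sphere_le n y (n, b)"
    for x y a b
    using openin_prod_topology_specialize[OF U(1) that(1)] openin_finite_sphere_below that(2,3)
    unfolding X_def by blast
  have no_graph: False
    if f: "\<And>x y. sphere_le n x y \<Longrightarrow> sphere_le n (f x) (f y)"
      and g: "\<And>x y. sphere_le n x y \<Longrightarrow> sphere_le n (g x) (g y)"
      and graph: "\<And>x. fst x \<le> n \<Longrightarrow>
          sphere_le n (f x) (n, a1) \<and> sphere_le n (g x) (n, b1) \<or>
          sphere_le n (f x) (n, a2) \<and> sphere_le n (g x) (n, b2)"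
      and id: "(\<forall>x. f x = x) \<and> g (0, False) \<noteq> (0, False) \<or> f (0, False) \<noteq> (0, False) \<and> (\<forall>x. g x = x)"
    for f g :: "nat \<times> bool \<Rightarrow> nat \<times> bool"
  proof -
    have "(\<forall>x. fst x \<le> n \<longrightarrow> f x = x) \<longleftrightarrow> (\<forall>x. fst x \<le> n \<longrightarrow> g x = x)"
    proof (rule sphere_motion_planner_graph_id_iff[OF U[unfolded X_def]])
      show "sphere_le n (f x) (f y)" "sphere_le n (g x) (g y)" if "sphere_le n x y" for x y
        using f g that by blast+
      show "(f x, g x) \<in> U" if "fst x \<le> n" for x
        using graph[OF that] below_max max1 max2 by blast
    qed
    then show False
      using id by auto
  qed
  have top: "x = (n, snd x)" if "fst x \<le> n" "\<not> fst x < n" for x :: "nat \<times> bool"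
    using that by (cases x) auto
  show False
  proof (cases "a1 = a2")
    case True
    with ne have "b1 \<noteq> b2" by simp
    show False
    proof (rule no_graph[of "\<lambda>_. (n, a1)" id])
      show "sphere_le n (n, a1) (n, a1)" for x y :: "nat \<times> bool"
        by (simp add: sphere_le_def)
      show "sphere_le n (n, a1) (n, a1) \<and> sphere_le n (id x) (n, b1) \<or>
          sphere_le n (n, a1) (n, a2) \<and> sphere_le n (id x) (n, b2)" if "fst x \<le> n" for x
        using top[OF that] \<open>a1 = a2\<close> \<open>b1 \<noteq> b2\<close> that by (cases x) (auto simp: sphere_le_def)
    qed (use \<open>n \<ge> 1\<close> in auto)
  next
    case False
    show False
    proof (cases "b1 = b2")
      case True
      show False
      proof (rule no_graph[of id "\<lambda>_. (n, b1)"])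
        show "sphere_le n (n, b1) (n, b1)" for x y :: "nat \<times> bool"
          by (simp add: sphere_le_def)
        show "sphere_le n (id x) (n, a1) \<and> sphere_le n (n, b1) (n, b1) \<or>
            sphere_le n (id x) (n, a2) \<and> sphere_le n (n, b1) (n, b2)" if "fst x \<le> n" for x
          using top[OF that] \<open>a1 \<noteq> a2\<close> \<open>b1 = b2\<close> that by (cases x) (auto simp: sphere_le_def)
      qed (use \<open>n \<ge> 1\<close> in auto)
    next
      case False
      define \<tau> where
        "\<tau> x = (if fst x < n then (fst x, \<not> snd x) else (n, if snd x = a1 then b1 else b2))" for x
      show False
      proof (rule no_graph[of id \<tau>])
        show "sphere_le n (\<tau> x) (\<tau> y)" if "sphere_le n x y" for x y
          using that unfolding \<tau>_def sphere_le_def by auto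
        show "sphere_le n (id x) (n, a1) \<and> sphere_le n (\<tau> x) (n, b1) \<or>
            sphere_le n (id x) (n, a2) \<and> sphere_le n (\<tau> x) (n, b2)" if "fst x \<le> n" for x
          using top[OF that] \<open>a1 \<noteq> a2\<close> that by (cases x) (auto simp: sphere_le_def \<tau>_def)
      qed (use \<open>n \<ge> 1\<close> in \<open>auto simp: \<tau>_def\<close>)
    qed
  qed
qed

text \<open>A path in a finite space may take a larger value at an isolated time, so the route from
  \<open>x\<close> to \<open>y\<close> can jump up to \<open>(n, a)\<close>, fall to the minimum, jump up to \<open>(n, b)\<close> and fall.\<close>

definition sphere_route :: "nat \<Rightarrow> bool \<Rightarrow> bool \<Rightarrow> nat \<times> bool \<Rightarrow> nat \<times> bool \<Rightarrow> real \<Rightarrow> nat \<times> bool"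
  where "sphere_route n a b x y t =
    (if t \<in> {0..1} then
       (if t < 1/4 then x else if t = 1/4 then (n, a) else if t < 3/4 then (0, False)
        else if t = 3/4 then (n, b) else y)
     else undefined)"

definition sphere_box :: "nat \<Rightarrow> bool \<Rightarrow> bool \<Rightarrow> ((nat \<times> bool) \<times> (nat \<times> bool)) set"
  where "sphere_box n a b = {x. sphere_le n x (n, a)} \<times> {y. sphere_le n y (n, b)}"

lemma sphere_route_continuous:
  assumes "n \<ge> 1" "sphere_le n x (n, a)" "sphere_le n y (n, b)"
  shows "continuous_map (top_of_set {0..1}) (finite_sphere n) (sphere_route n a b x y)"
  unfolding continuous_map_into_finite_sphere
proof
  let ?r = "sphere_route n a b x y"
  fix t :: real assume t: "t \<in> {0..1}"
  have "fst (?r t) \<le> n"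
    using t assms by (auto simp: sphere_route_def sphere_le_def)
  moreover have "\<exists>e>0. \<forall>s\<in>{0..1}. dist s t < e \<longrightarrow> sphere_le n (?r s) (?r t)"
  proof (cases "t = 1/4 \<or> t = 3/4")
    case True
    have "sphere_le n (?r s) (?r t)" if "s \<in> {0..1}" "\<bar>s - t\<bar> < 1/2" for s
      using True that t assms by (auto simp: sphere_route_def sphere_le_def)
    then show ?thesis
      by (intro exI[of _ "1/2"]) (auto simp: dist_real_def)
  next
    case False
    define e where "e = min \<bar>t - 1/4\<bar> \<bar>t - 3/4\<bar>"
    have "?r s = ?r t" if "s \<in> {0..1}" "\<bar>s - t\<bar> < e" for s
    proof -
      have "s < 1/4 \<longleftrightarrow> t < 1/4" "s < 3/4 \<longleftrightarrow> t < 3/4" "s \<noteq> 1/4" "s \<noteq> 3/4"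
        using that unfolding e_def by auto
      then show ?thesis
        using False that t by (simp add: sphere_route_def)
    qed
    moreover have "e > 0"
      using False unfolding e_def by auto
    ultimately show ?thesis
      using \<open>fst (?r t) \<le> n\<close> by (intro exI[of _ e]) (auto simp: dist_real_def sphere_le_def)
  qed
  ultimately show "fst (?r t) \<le> n \<and> (\<exists>e>0. \<forall>s\<in>{0..1}. dist s t < e \<longrightarrow> sphere_le n (?r s) (?r t))"
    by blast
qed

lemma sphere_route_mono:
  assumes "sphere_le n x' x" "sphere_le n y' y" "t \<in> {0..1}"
  shows "sphere_le n (sphere_route n a b x' y' t) (sphere_route n a b x y t)"
  using assms by (auto simp: sphere_route_def sphere_le_def)

lemma openin_prod_finite_sphereI:
  assumes "D \<subseteq> {p. fst p \<le> n} \<times> {p. fst p \<le> n}"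
    and down: "\<And>x y x' y'. (x, y) \<in> D \<Longrightarrow> sphere_le n x' x \<Longrightarrow> sphere_le n y' y \<Longrightarrow> (x', y') \<in> D"
  shows "openin (prod_topology (finite_sphere n) (finite_sphere n)) D"
  unfolding openin_prod_topology_alt
proof (intro allI impI)
  fix x y assume xy: "(x, y) \<in> D"
  then have "fst x \<le> n" "fst y \<le> n"
    using assms(1) by auto
  then show "\<exists>U V. openin (finite_sphere n) U \<and> openin (finite_sphere n) V \<and> x \<in> U \<and> y \<in> V \<and> U \<times> V \<subseteq> D"
    using down[OF xy] openin_finite_sphere_down_set
    by (intro exI[of _ "{x'. sphere_le n x' x}"] exI[of _ "{y'. sphere_le n y' y}"])
       (auto simp: sphere_le_def)
qed

lemma sphere_box_subset_topspace:
  "sphere_box n a b \<subseteq> topspace (prod_topology (finite_sphere n) (finite_sphere n))"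
  by (auto simp: sphere_box_def sphere_le_def topspace_finite_sphere)

lemma sphere_box_motion_planner:
  assumes "n \<ge> 1"
  shows "has_motion_planner (finite_sphere n) (sphere_box n a b)"
proof -
  let ?X = "finite_sphere n"
  let ?Y = "subtopology (prod_topology ?X ?X) (sphere_box n a b)"
  define s where "s p = sphere_route n a b (fst p) (snd p)" for p
  have box: "sphere_box n a b \<subseteq> topspace (prod_topology ?X ?X)"
    by (rule sphere_box_subset_topspace)
  then have ts: "topspace ?Y = sphere_box n a b"
    by (auto simp: topspace_subtopology)
  have "continuous_map ?Y (path_space ?X) s"
  proof (rule continuous_map_into_path_space)
    fix p assume "p \<in> topspace ?Y"
    then have "sphere_le n (fst p) (n, a)" "sphere_le n (snd p) (n, b)"
      unfolding ts sphere_box_def by auto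
    then have "continuous_map (top_of_set {0..1}) ?X (s p)"
      unfolding s_def by (rule sphere_route_continuous[OF assms])
    moreover have "\<forall>t. t \<notin> {0..1} \<longrightarrow> s p t = undefined"
      by (simp add: s_def sphere_route_def)
    ultimately show "continuous_map (top_of_set {0..1}) ?X (s p) \<and> (\<forall>t. t \<notin> {0..1} \<longrightarrow> s p t = undefined)"
      by blast
  next
    fix K V assume K: "compactin (top_of_set {0..1::real}) K" and V: "openin ?X V"
    have "K \<subseteq> {0..1}"
      using compactin_subset_topspace[OF K] by simp
    have "openin (prod_topology ?X ?X) {p \<in> sphere_box n a b. s p ` K \<subseteq> V}"
    proof (rule openin_prod_finite_sphereI)
      show "{p \<in> sphere_box n a b. s p ` K \<subseteq> V} \<subseteq> {p. fst p \<le> n} \<times> {p. fst p \<le> n}"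
        using box by (auto simp: topspace_finite_sphere)
      fix x y x' y'
      assume xy: "(x, y) \<in> {p \<in> sphere_box n a b. s p ` K \<subseteq> V}"
        and le: "sphere_le n x' x" "sphere_le n y' y"
      have "(x', y') \<in> sphere_box n a b"
        using xy le sphere_le_trans unfolding sphere_box_def by blast
      moreover have "s (x', y') t \<in> V" if "t \<in> K" for t
      proof -
        have "s (x, y) t \<in> V"
          using xy that by auto
        moreover have "sphere_le n (s (x', y') t) (s (x, y) t)"
          unfolding s_def using sphere_route_mono[OF le] \<open>K \<subseteq> {0..1}\<close> that by auto
        ultimately show ?thesis
          using openin_finite_sphere_below[OF V] by blast
      qed
      ultimately show "(x', y') \<in> {p \<in> sphere_box n a b. s p ` K \<subseteq> V}"
        by blast
    qed
    then show "openin ?Y {p \<in> topspace ?Y. s p ` K \<subseteq> V}"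
      unfolding ts by (rule subset_openin_subtopology) auto
  qed
  moreover have "\<forall>p\<in>sphere_box n a b. (s p 0, s p 1) = p"
    by (simp add: s_def sphere_route_def)
  ultimately show ?thesis
    unfolding has_motion_planner_def by blast
qed

lemma sphere_boxes_cover:
  "(\<Union>i<4::nat. sphere_box n (odd i) (2 \<le> i)) = topspace (prod_topology (finite_sphere n) (finite_sphere n))"
proof
  show "(\<Union>i<4::nat. sphere_box n (odd i) (2 \<le> i)) \<subseteq> topspace (prod_topology (finite_sphere n) (finite_sphere n))"
    using sphere_box_subset_topspace by blast
next
  show "topspace (prod_topology (finite_sphere n) (finite_sphere n)) \<subseteq> (\<Union>i<4::nat. sphere_box n (odd i) (2 \<le> i))"
  proof
    fix p assume "p \<in> topspace (prod_topology (finite_sphere n) (finite_sphere n))"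
    then obtain x y where p: "p = (x, y)" "fst x \<le> n" "fst y \<le> n"
      by (auto simp: topspace_finite_sphere)
    define a where "a = (fst x = n \<and> snd x)"
    define b where "b = (fst y = n \<and> snd y)"
    have "sphere_le n x (n, a)"
      unfolding a_def sphere_le_def using p by (cases x) auto
    moreover have "sphere_le n y (n, b)"
      unfolding b_def sphere_le_def using p by (cases y) auto
    ultimately have "p \<in> sphere_box n (odd i) (2 \<le> i)"
      if "i = (if a then 1 else 0) + (if b then 2 else 0)" for i :: nat
      using p(1) that unfolding sphere_box_def by auto
    then show "p \<in> (\<Union>i<4::nat. sphere_box n (odd i) (2 \<le> i))"
      by (intro UN_I[of "(if a then 1 else 0) + (if b then 2 else 0)"]) auto
  qed
qed

lemma openin_sphere_box:
  "openin (prod_topology (finite_sphere n) (finite_sphere n)) (sphere_box n a b)"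
  unfolding sphere_box_def openin_prod_Times_iff
  using openin_finite_sphere_down_set by simp

lemma sphere_cover_size_ge_4:
  fixes k :: nat and U :: "nat \<Rightarrow> ((nat \<times> bool) \<times> (nat \<times> bool)) set"
  assumes "n \<ge> 1"
    and cover: "\<forall>i<k. openin (prod_topology (finite_sphere n) (finite_sphere n)) (U i)
                      \<and> has_motion_planner (finite_sphere n) (U i)"
      "(\<Union>i<k. U i) = topspace (prod_topology (finite_sphere n) (finite_sphere n))"
  shows "4 \<le> k"
proof -
  have "\<exists>i<k. ((n, fst c), (n, snd c)) \<in> U i" for c :: "bool \<times> bool"
    using cover(2) by (auto simp: topspace_finite_sphere)
  then obtain idx where idx: "\<And>c. idx c < k \<and> ((n, fst c), (n, snd c)) \<in> U (idx c)"
    by metis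
  have "inj idx"
  proof (rule injI)
    fix c d assume "idx c = idx d"
    then show "c = d"
      using sphere_motion_planner_maximal_pair_unique[OF assms(1)] idx[of c] idx[of d] cover(1)
      by (metis prod.collapse)
  qed
  then have "card (UNIV :: (bool \<times> bool) set) \<le> card {..<k}"
    using idx by (intro card_inj_on_le) auto
  then show ?thesis
    by (simp add: card_UNIV_bool flip: UNIV_Times_UNIV)
qed

theorem corollary7:
  fixes n :: nat
  assumes "n \<ge> 1"
  shows "TC (finite_sphere n) = 4"
proof -
  have "TC (finite_sphere n) = enat 4"
  proof (rule TC_eqI)
    show "\<forall>i<4::nat. openin (prod_topology (finite_sphere n) (finite_sphere n)) (sphere_box n (odd i) (2 \<le> i))
        \<and> has_motion_planner (finite_sphere n) (sphere_box n (odd i) (2 \<le> i))"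
      using openin_sphere_box sphere_box_motion_planner[OF assms] by blast
    show "(\<Union>i<4::nat. sphere_box n (odd i) (2 \<le> i)) = topspace (prod_topology (finite_sphere n) (finite_sphere n))"
      by (rule sphere_boxes_cover)
  qed (rule sphere_cover_size_ge_4[OF assms])
  then show ?thesis
    by (simp add: numeral_eq_enat)
qed

end
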